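(* (a) A proposition $p$ of QHC is semi-stable if and only if it is stable. (b) A problem $\alpha$ of QHC is semi-decidable if and only if the proposition $?\alpha$ is semi-decidable.
   Context: QHC is a two-sorted first-order calculus. Its only terms are individual variables. Every formula is either a problem (denoted by Greek letters $\alpha,\beta,\gamma,\dots$) or a proposition (denoted by Latin letters $p,q,\dots$). Atomic formulas are proposition variables $p(t_1,\dots,t_n)$ (of proposition type), problem variables $\pi(t_1,\dots,t_n)$ (of problem type), and the constants $0$ (a proposition, classical falsity) and $\bot$ (a problem, intuitionistic absurdity). Propositions are closed under the classical connectives $\land,\lor,\to$ and quantifiers $\exists,\forall$; problems are closed under the intuitionistic connectives $\land,\lor,\to$ and quantifiers $\exists,\forall$ (the same symbols are used, distinguished by the type of the arguments). $\neg p$ abbreviates $p\to 0$, $\neg\alpha$ abbreviates $\alpha\to\bot$, and $\leftrightarrow$ is defined as usual. There are two type-conversion operators: if $p$ is a proposition then $!p$ is a problem, and if $\alpha$ is a problem then $?\alpha$ is a proposition. Deductive system of QHC: all axioms and rules of classical predicate logic applied to all propositions; all postulates and rules of intuitionistic predicate logic applied to all problems; the rules $p\,/\,!p$ and $\alpha\,/\,?\alpha$; and the schemas $?!p\to p$; $\alpha\to\, !?\alpha$; $!(p\to q)\to(!p\to !q)$; $?(\alpha\to\beta)\to(?\alpha\to ?\beta)$; $!0\to\bot$; $?(\alpha\land\beta)\leftrightarrow ?\alpha\land ?\beta$; $?(\alpha\lor\beta)\leftrightarrow ?\alpha\lor ?\beta$; $?\bot\to 0$; $?\exists x\,\alpha(x)\leftrightarrow\exists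 x\,?\alpha(x)$; $?\forall x\,\alpha(x)\to\forall x\,?\alpha(x)$ (usual variable side conditions implicit). $\vdash A$ means $A$ is derivable in QHC; $A\Rightarrow B$ means $\vdash A\to B$ and $A\Leftrightarrow B$ means $\vdash A\leftrightarrow B$ (with $A,B$ of the same type); $A\vdash B$ means $B$ is derivable in QHC from the premise $A$. Notation: $\Box p := ?!p$ (a proposition) and $\nabla\alpha := !?\alpha$ (a problem). QC and QH denote classical and intuitionistic predicate calculus. A proposition $p$ is stable if $\neg !\neg p\Rightarrow\, !p$, and semi-stable if $\vdash ?(\neg !\neg p\to !p)$; $p$ is semi-decidable if $\vdash ?(!p\lor !\neg p)$. A problem $\alpha$ is semi-decidable if $\vdash ?(\alpha\lor\neg\alpha)$. *)

theory Defs
  imports Main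
begin

text \<open>Terms are individual variables, represented by de Bruijn indices (nat).
  Quantifiers bind index 0. Atomic formulas: proposition variables
  p(t1,...,tn) = PAtom p ts, problem variables pi(t1,...,tn) = QAtom pi ts,
  the proposition 0 (Zero) and the problem bottom (Bot).
  Bang p is !p, Why a is ?a.\<close>

datatype prp =
    PAtom nat "nat list"
  | Zero
  | PAnd prp prp
  | POr prp prp
  | PImp prp prp
  | PEx prp
  | PAll prp
  | Why prb
and prb =
    QAtom nat "nat list"
  | Bot
  | QAnd prb prb
  | QOr prb prb
  | QImp prb prb
  | QEx prb
  | QAll prb
  | Bang prp

text \<open>Renaming of variables (the only terms are variables, so
  substitution of a term for a variable is a renaming).\<close>

definition up :: "(nat \<Rightarrow> nat) \<Rightarrow> nat \<Rightarrow> nat" where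
  "up f i = (case i of 0 \<Rightarrow> 0 | Suc j \<Rightarrow> Suc (f j))"

primrec renp :: "(nat \<Rightarrow> nat) \<Rightarrow> prp \<Rightarrow> prp"
and renq :: "(nat \<Rightarrow> nat) \<Rightarrow> prb \<Rightarrow> prb" where
  "renp f (PAtom n ts) = PAtom n (map f ts)"
| "renp f Zero = Zero"
| "renp f (PAnd a b) = PAnd (renp f a) (renp f b)"
| "renp f (POr a b) = POr (renp f a) (renp f b)"
| "renp f (PImp a b) = PImp (renp f a) (renp f b)"
| "renp f (PEx a) = PEx (renp (up f) a)"
| "renp f (PAll a) = PAll (renp (up f) a)"
| "renp f (Why a) = Why (renq f a)"
| "renq f (QAtom n ts) = QAtom n (map f ts)"
| "renq f Bot = Bot"
| "renq f (QAnd a b) = QAnd (renq f a) (renq f b)"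
| "renq f (QOr a b) = QOr (renq f a) (renq f b)"
| "renq f (QImp a b) = QImp (renq f a) (renq f b)"
| "renq f (QEx a) = QEx (renq (up f) a)"
| "renq f (QAll a) = QAll (renq (up f) a)"
| "renq f (Bang p) = Bang (renp f p)"

text \<open>Instantiation of the bound variable 0 by the variable t, and lifting
  (shifting all free variables, used for the eigenvariable conditions).\<close>

definition inst :: "nat \<Rightarrow> nat \<Rightarrow> nat" where
  "inst t i = (case i of 0 \<Rightarrow> t | Suc j \<Rightarrow> j)"

abbreviation "instp t a \<equiv> renp (inst t) a"
abbreviation "instq t a \<equiv> renq (inst t) a"
abbreviation "liftp a \<equiv> renp Suc a"
abbreviation "liftq a \<equiv> renq Suc a"

definition PNeg :: "prp \<Rightarrow> prp" where "PNeg p = PImp p Zero"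
definition QNeg :: "prb \<Rightarrow> prb" where "QNeg a = QImp a Bot"
definition PIff :: "prp \<Rightarrow> prp \<Rightarrow> prp" where "PIff p q = PAnd (PImp p q) (PImp q p)"
definition QIff :: "prb \<Rightarrow> prb \<Rightarrow> prb" where "QIff a b = QAnd (QImp a b) (QImp b a)"

text \<open>Hilbert-style: classical predicate logic
  on propositions, intuitionistic predicate logic on problems, plus the
  conversion rules and schemas of QHC.\<close>

inductive pder :: "prp \<Rightarrow> bool" and qder :: "prb \<Rightarrow> bool" where
  pK: "pder (PImp a (PImp b a))"
| pS: "pder (PImp (PImp a (PImp b c)) (PImp (PImp a b) (PImp a c)))"
| pAndE1: "pder (PImp (PAnd a b) a)"
| pAndE2: "pder (PImp (PAnd a b) b)"
| pAndI: "pder (PImp a (PImp b (PAnd a b)))"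
| pOrI1: "pder (PImp a (POr a b))"
| pOrI2: "pder (PImp b (POr a b))"
| pOrE: "pder (PImp (PImp a c) (PImp (PImp b c) (PImp (POr a b) c)))"
| pEfq: "pder (PImp Zero a)"
| pDne: "pder (PImp (PImp (PImp a Zero) Zero) a)"
| pAllE: "pder (PImp (PAll a) (instp t a))"
| pExI: "pder (PImp (instp t a) (PEx a))"
| pMP: "pder (PImp a b) \<Longrightarrow> pder a \<Longrightarrow> pder b"
| pAllI: "pder (PImp (liftp b) a) \<Longrightarrow> pder (PImp b (PAll a))"
| pExE: "pder (PImp a (liftp b)) \<Longrightarrow> pder (PImp (PEx a) b)"
| qK: "qder (QImp a (QImp b a))"
| qS: "qder (QImp (QImp a (QImp b c)) (QImp (QImp a b) (QImp a c)))"
| qAndE1: "qder (QImp (QAnd a b) a)"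
| qAndE2: "qder (QImp (QAnd a b) b)"
| qAndI: "qder (QImp a (QImp b (QAnd a b)))"
| qOrI1: "qder (QImp a (QOr a b))"
| qOrI2: "qder (QImp b (QOr a b))"
| qOrE: "qder (QImp (QImp a c) (QImp (QImp b c) (QImp (QOr a b) c)))"
| qEfq: "qder (QImp Bot a)"
| qAllE: "qder (QImp (QAll a) (instq t a))"
| qExI: "qder (QImp (instq t a) (QEx a))"
| qMP: "qder (QImp a b) \<Longrightarrow> qder a \<Longrightarrow> qder b"
| qAllI: "qder (QImp (liftq b) a) \<Longrightarrow> qder (QImp b (QAll a))"
| qExE: "qder (QImp a (liftq b)) \<Longrightarrow> qder (QImp (QEx a) b)"
| bangR: "pder p \<Longrightarrow> qder (Bang p)"
| whyR: "qder a \<Longrightarrow> pder (Why a)"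
| whyBang: "pder (PImp (Why (Bang p)) p)"
| bangWhy: "qder (QImp a (Bang (Why a)))"
| bangImp: "qder (QImp (Bang (PImp p q)) (QImp (Bang p) (Bang q)))"
| whyImp: "pder (PImp (Why (QImp a b)) (PImp (Why a) (Why b)))"
| bangZero: "qder (QImp (Bang Zero) Bot)"
| whyAnd: "pder (PIff (Why (QAnd a b)) (PAnd (Why a) (Why b)))"
| whyOr: "pder (PIff (Why (QOr a b)) (POr (Why a) (Why b)))"
| whyBot: "pder (PImp (Why Bot) Zero)"
| whyEx: "pder (PIff (Why (QEx a)) (PEx (Why a)))"
| whyAll: "pder (PImp (Why (QAll a)) (PAll (Why a)))"

definition stable :: "prp \<Rightarrow> bool" where
  "stable p \<longleftrightarrow> qder (QImp (QNeg (Bang (PNeg p))) (Bang p))"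

definition semi_stable :: "prp \<Rightarrow> bool" where
  "semi_stable p \<longleftrightarrow> pder (Why (QImp (QNeg (Bang (PNeg p))) (Bang p)))"

definition semi_decidable_prop :: "prp \<Rightarrow> bool" where
  "semi_decidable_prop p \<longleftrightarrow> pder (Why (QOr (Bang p) (Bang (PNeg p))))"

definition semi_decidable_prob :: "prb \<Rightarrow> bool" where
  "semi_decidable_prob a \<longleftrightarrow> pder (Why (QOr a (QNeg a)))"

end

theory Submission
  imports Defs
begin

text \<open>The conversions are adjoint: \<open>?\<alpha> \<Rightarrow> p\<close> iff \<open>\<alpha> \<Rightarrow> !p\<close>, using the unit
  \<open>\<alpha> \<Rightarrow> !?\<alpha>\<close> and the counit \<open>?!p \<Rightarrow> p\<close>. For (a), a derivable \<open>?(\<alpha> \<rightarrow> !p)\<close> yields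
  \<open>?\<alpha> \<Rightarrow> ?!p \<Rightarrow> p\<close>, hence \<open>\<alpha> \<Rightarrow> !p\<close> by adjunction; with \<open>\<alpha> = \<not>!\<not>p\<close> this is
  stability. For (b), \<open>?\<not>\<alpha> \<Rightarrow> \<not>?\<alpha>\<close> by \<open>?\<bottom> \<Rightarrow> 0\<close>, so \<open>\<not>\<alpha> \<Rightarrow> !\<not>?\<alpha>\<close>; and
  \<open>!\<not>?\<alpha> \<Rightarrow> \<not>!?\<alpha> \<Rightarrow> \<not>\<alpha>\<close> by \<open>!0 \<Rightarrow> \<bottom>\<close>. Hence \<open>\<alpha> \<or> \<not>\<alpha>\<close> and \<open>!?\<alpha> \<or> !\<not>?\<alpha>\<close>
  imply each other under \<open>?\<close>, where \<open>?\<close> commutes with \<open>\<or>\<close>.\<close>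

lemma pder_imp_trans: "pder (PImp a b) \<Longrightarrow> pder (PImp b c) \<Longrightarrow> pder (PImp a c)"
  by (meson pS pK pMP)

lemma qder_imp_trans: "qder (QImp a b) \<Longrightarrow> qder (QImp b c) \<Longrightarrow> qder (QImp a c)"
  by (meson qS qK qMP)

lemma pder_imp_mono_concl: "pder (PImp b c) \<Longrightarrow> pder (PImp (PImp a b) (PImp a c))"
  by (meson pS pK pMP)

lemma qder_imp_mono_concl: "qder (QImp b c) \<Longrightarrow> qder (QImp (QImp a b) (QImp a c))"
  by (meson qS qK qMP)

lemma qder_imp_antimono_prem: "qder (QImp a b) \<Longrightarrow> qder (QImp (QImp b c) (QImp a c))"
proof -
  assume ab: "qder (QImp a b)"
  have "qder (QImp (QImp b c) (QImp a (QImp b c)))" by (rule qK)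
  then have "qder (QImp (QImp b c) (QImp (QImp a b) (QImp a c)))"
    using qder_imp_trans qS by blast
  then show ?thesis using ab by (meson qS qK qMP)
qed

lemma pder_POr_mono:
  "pder (PImp a c) \<Longrightarrow> pder (PImp b d) \<Longrightarrow> pder (PImp (POr a b) (POr c d))"
  by (meson pOrE pOrI1 pOrI2 pMP pder_imp_trans)

lemma qder_QOr_mono:
  "qder (QImp a c) \<Longrightarrow> qder (QImp b d) \<Longrightarrow> qder (QImp (QOr a b) (QOr c d))"
  by (meson qOrE qOrI1 qOrI2 qMP qder_imp_trans)

lemma pder_PIffD1: "pder (PIff a b) \<Longrightarrow> pder (PImp a b)"
  unfolding PIff_def by (meson pAndE1 pMP)

lemma pder_PIffD2: "pder (PIff a b) \<Longrightarrow> pder (PImp b a)"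
  unfolding PIff_def by (meson pAndE2 pMP)

lemma Why_mono: "qder (QImp a b) \<Longrightarrow> pder (PImp (Why a) (Why b))"
  by (meson whyR whyImp pMP)

lemma Bang_mono: "pder (PImp p q) \<Longrightarrow> qder (QImp (Bang p) (Bang q))"
  by (meson bangR bangImp qMP)

lemma Why_Bang_adjunction: "pder (PImp (Why a) p) \<longleftrightarrow> qder (QImp a (Bang p))"
proof
  assume "pder (PImp (Why a) p)"
  then show "qder (QImp a (Bang p))"
    using bangWhy Bang_mono qder_imp_trans by blast
next
  assume "qder (QImp a (Bang p))"
  then show "pder (PImp (Why a) p)"
    using whyBang Why_mono pder_imp_trans by blast
qed

lemma pder_Why_imp_Bang_iff: "pder (Why (QImp a (Bang p))) \<longleftrightarrow> qder (QImp a (Bang p))"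
proof
  assume "pder (Why (QImp a (Bang p)))"
  then have "pder (PImp (Why a) (Why (Bang p)))" using whyImp pMP by blast
  then have "pder (PImp (Why a) p)" using whyBang pder_imp_trans by blast
  then show "qder (QImp a (Bang p))" using Why_Bang_adjunction by blast
qed (rule whyR)

lemma Why_QNeg_imp_PNeg_Why: "pder (PImp (Why (QNeg a)) (PNeg (Why a)))"
proof -
  have "pder (PImp (Why (QImp a Bot)) (PImp (Why a) (Why Bot)))" by (rule whyImp)
  moreover have "pder (PImp (PImp (Why a) (Why Bot)) (PImp (Why a) Zero))"
    using pder_imp_mono_concl whyBot by blast
  ultimately show ?thesis unfolding QNeg_def PNeg_def using pder_imp_trans by blast
qed

lemma Bang_PNeg_imp_QNeg_Bang: "qder (QImp (Bang (PNeg p)) (QNeg (Bang p)))"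
proof -
  have "qder (QImp (Bang (PImp p Zero)) (QImp (Bang p) (Bang Zero)))" by (rule bangImp)
  moreover have "qder (QImp (QImp (Bang p) (Bang Zero)) (QImp (Bang p) Bot))"
    using qder_imp_mono_concl bangZero by blast
  ultimately show ?thesis unfolding QNeg_def PNeg_def using qder_imp_trans by blast
qed

lemma QNeg_imp_Bang_PNeg_Why: "qder (QImp (QNeg a) (Bang (PNeg (Why a))))"
  using Why_QNeg_imp_PNeg_Why Why_Bang_adjunction by blast

lemma Bang_PNeg_Why_imp_QNeg: "qder (QImp (Bang (PNeg (Why a))) (QNeg a))"
proof -
  have "qder (QImp (QNeg (Bang (Why a))) (QNeg a))"
    unfolding QNeg_def using qder_imp_antimono_prem bangWhy by blast
  then show ?thesis using Bang_PNeg_imp_QNeg_Bang qder_imp_trans by blast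
qed

lemma semi_stable_iff_stable: "semi_stable p \<longleftrightarrow> stable p"
  unfolding semi_stable_def stable_def by (rule pder_Why_imp_Bang_iff)

lemma semi_decidable_prob_iff_Why: "semi_decidable_prob a \<longleftrightarrow> semi_decidable_prop (Why a)"
proof
  assume "semi_decidable_prob a"
  moreover have "qder (QImp (QOr a (QNeg a)) (QOr (Bang (Why a)) (Bang (PNeg (Why a)))))"
    using qder_QOr_mono[OF bangWhy QNeg_imp_Bang_PNeg_Why] .
  ultimately show "semi_decidable_prop (Why a)"
    unfolding semi_decidable_prob_def semi_decidable_prop_def using Why_mono pMP by blast
next
  assume "semi_decidable_prop (Why a)"
  moreover have "pder (PImp (POr (Why (Bang (Why a))) (Why (Bang (PNeg (Why a)))))
                            (POr (Why a) (Why (QNeg a))))"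
    using pder_POr_mono[OF whyBang Why_mono[OF Bang_PNeg_Why_imp_QNeg]] .
  then have "pder (PImp (Why (QOr (Bang (Why a)) (Bang (PNeg (Why a))))) (Why (QOr a (QNeg a))))"
    using pder_imp_trans pder_PIffD1[OF whyOr] pder_PIffD2[OF whyOr] by blast
  ultimately show "semi_decidable_prob a"
    unfolding semi_decidable_prob_def semi_decidable_prop_def using pMP by blast
qed

theorem proposition2p24:
  shows "(\<forall>p. semi_stable p \<longleftrightarrow> stable p) \<and>
         (\<forall>a. semi_decidable_prob a \<longleftrightarrow> semi_decidable_prop (Why a))"
  using semi_stable_iff_stable semi_decidable_prob_iff_Why by blast

end
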